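(* In the setting of the errors-in-variables model with restricted inverted-Wishart prior described below, with $n\ge3$, $\nu=n-1$, positive-definite sample covariance $S$, and any proper prior density $p(\beta)$, the posterior density of $\beta$ (defined for $\nu_0>1$) converges, for each $\beta\neq0$, as $\nu_0\to0^+$ (for any fixed $-1<\rho_0<1$, $\kappa_0>0$) to $$p(\beta\mid y)=\frac{p(\beta)\,J(\beta,\nu,r,l)}{\int_{-\infty}^\infty p(\beta)\,J(\beta,\nu,r,l)\,d\beta},\qquad r=\frac{S_{12}}{(S_{11}S_{22})^{1/2}},\quad l=\Big(\frac{S_{22}}{S_{11}}\Big)^{1/2}.$$ Here the posterior for $\nu_0>1$ is $p(\beta)\,|\beta|^{\nu_0}|\Psi_0(\beta)+\nu S|^{-(\nu_0+\nu)/2}J\big(\beta,\nu_0+\nu,r(\Psi_0(\beta)+\nu S),l(\Psi_0(\beta)+\nu S)\big)$ normalized over $\beta$, and this expression is the one whose limit is taken. Moreover $J(\beta,\nu,r,l)=J(\beta/l,\nu,r,1)$, so the limit depends on the data only through $r$ and $l$, and the posterior density of $\tilde\beta=\beta/l$ under a proper prior density $q(\tilde\beta)$ on $\tilde\beta$ is $q(\tilde\beta)J(\tilde\beta,\nu,r,1)/\int q\,J(\cdot,\nu,r,1)$, which depends on the data only through $r$.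
   Context: Model: $n$ i.i.d. pairs $(y_{1i},y_{2i})$, bivariate normal with mean $(\mu_1,\alpha+\beta\mu_1)$ and covariance $\Sigma=\begin{pmatrix}\tau^2+\sigma_1^2&\beta\tau^2\\ \beta\tau^2&\beta^2\tau^2+\sigma_2^2\end{pmatrix}$, $\tau^2,\sigma_1^2,\sigma_2^2\ge0$. Prior: constant in $(\mu_1,\alpha)$; $p(\tau^2,\sigma_1^2,\sigma_2^2\mid\beta)=|\beta|p(\Sigma\mid\beta)$ with $p(\Sigma\mid\beta)\propto|\Sigma|^{-(\nu_0+3)/2}\exp[-\tfrac12\operatorname{tr}(\Psi_0(\beta)\Sigma^{-1})]$ restricted to $R_\beta$ and normalized, where $\Psi_0(\beta)=\nu_0\kappa_0^2\begin{pmatrix}1&\rho_0\beta\\ \rho_0\beta&\beta^2\end{pmatrix}$ and $R_\beta$ is the set of positive-definite symmetric $\Sigma$ with $\Sigma_{12}/\beta\ge0$, $\Sigma_{11}-\Sigma_{12}/\beta\ge0$, $\Sigma_{22}-\beta\Sigma_{12}\ge0$. For a positive-definite $\Psi$, $r(\Psi)=\Psi_{12}/(\Psi_{11}\Psi_{22})^{1/2}$, $l(\Psi)=(\Psi_{22}/\Psi_{11})^{1/2}$. Functions: $p_t(t;\nu)$ Student $t$ density; $P_F(x;\nu_1,\nu_2)$ $F$ distribution function; for $\nu>1$, $-1<r<1$, $\tilde\beta>0$: $t_-(\nu,r)=-\sqrt{\nu}\,r/\sqrt{1-r^2}$, $t_+(\tilde\beta,\nu,r)=\sqrt{\nu}(\tilde\beta-r)/\sqrt{1-r^2}$,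 $F(t,\tilde\beta,\nu,r)=\frac{\nu-1}{\nu+1}\frac{\nu+t^2}{[t_+-t_-]^2-[t-t_-]^2}$, $I(\tilde\beta,\nu,r)=\int_{t_-}^{t_+}p_t(t;\nu)P_F(F(t,\tilde\beta,\nu,r);\nu+1,\nu-1)\,dt$, and for $\beta\ne0$, $l>0$: $J(\beta,\nu,r,l)=I(|\beta|/l,\nu,r\,\mathrm{sign}\beta)+I(l/|\beta|,\nu,r\,\mathrm{sign}\beta)$. *)

theory Defs
  imports "HOL-Analysis.Analysis"
begin

definition student_t_density :: "real \<Rightarrow> real \<Rightarrow> real" where
  "student_t_density t nu =
     Gamma ((nu + 1) / 2) / (sqrt (nu * pi) * Gamma (nu / 2))
     * (1 + t\<^sup>2 / nu) powr (- (nu + 1) / 2)"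

definition F_density :: "real \<Rightarrow> real \<Rightarrow> real \<Rightarrow> real" where
  "F_density u n1 n2 =
     (if 0 < u then
        (n1 / n2) powr (n1 / 2) * u powr (n1 / 2 - 1)
        * (1 + n1 * u / n2) powr (- (n1 + n2) / 2) / Beta (n1 / 2) (n2 / 2)
      else 0)"

definition F_cdf :: "real \<Rightarrow> real \<Rightarrow> real \<Rightarrow> real" where
  "F_cdf x n1 n2 = (LINT u:{..x}|lborel. F_density u n1 n2)"

definition t_minus :: "real \<Rightarrow> real \<Rightarrow> real" where
  "t_minus nu r = - sqrt nu * r / sqrt (1 - r\<^sup>2)"

definition t_plus :: "real \<Rightarrow> real \<Rightarrow> real \<Rightarrow> real" where
  "t_plus bt nu r = sqrt nu * (bt - r) / sqrt (1 - r\<^sup>2)"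

definition Ffun :: "real \<Rightarrow> real \<Rightarrow> real \<Rightarrow> real \<Rightarrow> real" where
  "Ffun t bt nu r =
     (nu - 1) / (nu + 1) * (nu + t\<^sup>2)
     / ((t_plus bt nu r - t_minus nu r)\<^sup>2 - (t - t_minus nu r)\<^sup>2)"

definition Ifun :: "real \<Rightarrow> real \<Rightarrow> real \<Rightarrow> real" where
  "Ifun bt nu r =
     (LINT t:{t_minus nu r .. t_plus bt nu r}|lborel.
        student_t_density t nu * F_cdf (Ffun t bt nu r) (nu + 1) (nu - 1))"

definition Jfun :: "real \<Rightarrow> real \<Rightarrow> real \<Rightarrow> real \<Rightarrow> real" where
  "Jfun b nu r l = Ifun (\<bar>b\<bar> / l) nu (r * sgn b) + Ifun (l / \<bar>b\<bar>) nu (r * sgn b)"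

definition pos_def2 :: "real^2^2 \<Rightarrow> bool" where
  "pos_def2 A \<longleftrightarrow> transpose A = A \<and> (\<forall>x::real^2. x \<noteq> 0 \<longrightarrow> 0 < x \<bullet> (A *v x))"

definition r_of :: "real^2^2 \<Rightarrow> real" where
  "r_of A = A$1$2 / sqrt (A$1$1 * A$2$2)"

definition l_of :: "real^2^2 \<Rightarrow> real" where
  "l_of A = sqrt (A$2$2 / A$1$1)"

definition Psi0 :: "real \<Rightarrow> real \<Rightarrow> real \<Rightarrow> real \<Rightarrow> real^2^2" where
  "Psi0 nu0 kappa0 rho0 b =
     (nu0 * kappa0\<^sup>2) *\<^sub>R vector [vector [1, rho0 * b], vector [rho0 * b, b\<^sup>2]]"

definition proper_density :: "(real \<Rightarrow> real) \<Rightarrow> bool" where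
  "proper_density p \<longleftrightarrow> p \<in> borel_measurable lborel \<and> (\<forall>x. 0 \<le> p x)
     \<and> integrable lborel p \<and> integral\<^sup>L lborel p = 1"

definition post_unnorm ::
  "(real \<Rightarrow> real) \<Rightarrow> nat \<Rightarrow> real \<Rightarrow> real \<Rightarrow> real \<Rightarrow> real^2^2 \<Rightarrow> real \<Rightarrow> real" where
  "post_unnorm p n nu0 kappa0 rho0 S b =
     (let nu = real n - 1; M = Psi0 nu0 kappa0 rho0 b + nu *\<^sub>R S in
      p b * \<bar>b\<bar> powr nu0 * det M powr (- (nu0 + nu) / 2)
      * Jfun b (nu0 + nu) (r_of M) (l_of M))"

definition posterior ::
  "(real \<Rightarrow> real) \<Rightarrow> nat \<Rightarrow> real \<Rightarrow> real \<Rightarrow> real \<Rightarrow> real^2^2 \<Rightarrow> real \<Rightarrow> real" where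
  "posterior p n nu0 kappa0 rho0 S b =
     post_unnorm p n nu0 kappa0 rho0 S b
     / (LINT b'|lborel. post_unnorm p n nu0 kappa0 rho0 S b')"

end

theory Submission
  imports Defs
begin

text \<open>
  Writing \<open>M = \<Psi>\<^sub>0(\<beta>) + \<nu> S\<close>, the unnormalised posterior factors as
  \<open>p(\<beta>) K(\<nu>\<^sub>0, \<beta>)\<close> with the kernel
  \<open>K(\<nu>\<^sub>0, \<beta>) = \<bar>\<beta>\<bar> powr \<nu>\<^sub>0 * (det M) powr (-(\<nu>\<^sub>0 + \<nu>)/2) * J(\<beta>, \<nu>\<^sub>0 + \<nu>, r(M), l(M))\<close>.
  The theorem follows from three facts:
  (1) \<open>K\<close> is jointly continuous on \<open>[0, \<infinity>) \<times> (\<real> - {0})\<close>, and \<open>K(0, \<beta>)\<close> is a positive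
      constant times \<open>J(\<beta>, \<nu>, r(S), l(S))\<close>;
  (2) \<open>K(\<nu>\<^sub>0, \<cdot>)\<close> is bounded uniformly for small \<open>\<nu>\<^sub>0 > 0\<close>: the factor
      \<open>\<bar>\<beta>\<bar> powr \<nu>\<^sub>0\<close> is absorbed by the quadratic growth of \<open>det M\<close> in \<open>\<beta>\<close>, and \<open>J\<close> is
      locally bounded in its degrees of freedom;
  (3) dominated convergence then lets the normalising integral pass to the limit.
  The file first establishes dominated convergence along a parameter, then continuity and
  domination properties of the F distribution function, the t density, and the integrals
  \<open>I\<close> and \<open>J\<close> (all by dominated convergence with explicit integrable majorants), then the
  \<open>2 \<times> 2\<close> matrix facts (superadditivity of the determinant), then properties (1)-(2) of the
  kernel, and finally the abstract limit theorem for normalised densities (3).  The scale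
  invariance of \<open>J\<close> and a change of variables give the statement about \<open>\<beta> / l\<close>.
\<close>

lemma integrable_FTC_atLeast:
  fixes f F :: "real \<Rightarrow> real"
  assumes m: "f \<in> borel_measurable borel"
    and d: "\<And>x. a \<le> x \<Longrightarrow> DERIV F x :> f x"
    and nn: "\<And>x. a \<le> x \<Longrightarrow> 0 \<le> f x"
    and lim: "(F \<longlongrightarrow> T) at_top"
  shows "integrable lborel (\<lambda>x. indicator {a..} x * f x)"
proof -
  have e: "(\<integral>\<^sup>+x. ennreal (f x) * indicator {a ..} x \<partial>lborel) = T - F a"
    by (rule nn_integral_FTC_atLeast[OF m d nn lim])
  have "(\<integral>\<^sup>+x. ennreal (norm (indicator {a..} x * f x)) \<partial>lborel)
      = (\<integral>\<^sup>+x. ennreal (f x) * indicator {a ..} x \<partial>lborel)"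
    by (intro nn_integral_cong) (auto simp: indicator_def nn)
  then show ?thesis using e m unfolding integrable_iff_bounded by simp
qed

text \<open>The Cauchy kernel \<open>1/(1+x\<^sup>2)\<close> is integrable (antiderivative \<open>arctan\<close>, by symmetry).\<close>
lemma integrable_inv_1_plus_sq: "integrable lborel (\<lambda>x::real. 1 / (1 + x\<^sup>2))"
proof -
  have m: "(\<lambda>x::real. 1 / (1 + x\<^sup>2)) \<in> borel_measurable borel" by measurable
  have right: "integrable lborel (\<lambda>x::real. indicator {0..} x * (1 / (1 + x\<^sup>2)))"
  proof (rule integrable_FTC_atLeast[OF m, where F=arctan and T="pi/2"])
    show "\<And>x. 0 \<le> x \<Longrightarrow> DERIV arctan x :> 1 / (1 + x\<^sup>2)"
      by (auto intro!: derivative_eq_intros simp: field_simps power2_eq_square add_nonneg_eq_0_iff)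
  qed (auto simp: add_pos_nonneg tendsto_arctan_at_top)
  have left: "integrable lborel (\<lambda>x::real. indicator {0..} (0 + (-1) * x) * (1 / (1 + (0 + (-1) * x)\<^sup>2)))"
    by (rule lborel_integrable_real_affine[OF right]) simp
  have "integrable lborel (\<lambda>x::real. indicator {0..} x * (1 / (1 + x\<^sup>2))
          + indicator {0..} (0 + (-1) * x) * (1 / (1 + (0 + (-1) * x)\<^sup>2)))"
    using right left by (rule Bochner_Integration.integrable_add)
  then show ?thesis
    by (rule Bochner_Integration.integrable_bound) (auto simp: m indicator_def)
qed

lemma integrable_powr_atLeast1:
  fixes e :: real assumes "e < -1"
  shows "integrable lborel (\<lambda>x. indicator {1..} x * x powr e)"
proof (rule integrable_FTC_atLeast[where F="\<lambda>x. x powr (e+1) / (e+1)" and T=0])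
  show "\<And>x. 1 \<le> x \<Longrightarrow> ((\<lambda>x. x powr (e + 1) / (e + 1)) has_real_derivative x powr e) (at x)"
    using assms by (auto intro!: derivative_eq_intros)
  show "((\<lambda>x. x powr (e + 1) / (e + 1)) \<longlongrightarrow> 0) at_top"
    using assms by real_asymp
qed auto

lemma tendsto_integral_dominated:
  fixes s :: "'p::first_countable_topology \<Rightarrow> 'a \<Rightarrow> real"
  assumes meas: "\<And>t. t \<in> T \<Longrightarrow> s t \<in> borel_measurable M"
    and f: "f \<in> borel_measurable M" and w: "integrable M w"
    and lim: "AE x in M. ((\<lambda>t. s t x) \<longlongrightarrow> f x) (at a within T)"
    and bound: "\<forall>\<^sub>F t in at a within T. \<forall>x. \<bar>s t x\<bar> \<le> w x"
  shows "((\<lambda>t. integral\<^sup>L M (s t)) \<longlongrightarrow> integral\<^sup>L M f) (at a within T)"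
  unfolding tendsto_at_iff_sequentially
proof (intro allI impI)
  fix X :: "nat \<Rightarrow> 'p" assume X: "\<forall>i. X i \<in> T - {a}" "X \<longlonglongrightarrow> a"
  then have X_lim: "filterlim X (at a within T) sequentially"
    by (auto simp: filterlim_at)
  obtain N where N: "\<And>i. N \<le> i \<Longrightarrow> \<forall>x. \<bar>s (X i) x\<bar> \<le> w x"
    using filterlim_iff[THEN iffD1, OF X_lim, rule_format, OF bound]
    by (auto simp: eventually_sequentially)
  have "(\<lambda>i. integral\<^sup>L M (s (X (i + N)))) \<longlonglongrightarrow> integral\<^sup>L M f"
  proof (rule integral_dominated_convergence[OF f _ w])
    show "s (X (i + N)) \<in> borel_measurable M" for i using meas X(1) by blast
    show "AE x in M. (\<lambda>i. s (X (i + N)) x) \<longlonglongrightarrow> f x"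
      using lim by eventually_elim
        (auto intro: LIMSEQ_ignore_initial_segment filterlim_compose[OF _ X_lim])
    show "AE x in M. norm (s (X (i + N)) x) \<le> w x" for i using N[of "i + N"] by simp
  qed
  then show "((\<lambda>t. integral\<^sup>L M (s t)) \<circ> X) \<longlonglongrightarrow> integral\<^sup>L M f"
    unfolding comp_def by (rule LIMSEQ_offset[where k=N])
qed

lemma integral_pos_interval:
  fixes f :: "real \<Rightarrow> real"
  assumes int: "integrable lborel f" and nn: "\<And>x. 0 \<le> f x"
    and pos: "\<And>x. a < x \<Longrightarrow> x < b \<Longrightarrow> 0 < f x" and ab: "a < b"
  shows "0 < integral\<^sup>L lborel f"
proof (rule ccontr)
  assume "\<not> 0 < integral\<^sup>L lborel f"
  moreover have "0 \<le> integral\<^sup>L lborel f" using nn by (intro integral_nonneg_AE AE_I2) auto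
  ultimately have "AE x in lborel. f x = 0"
    using integral_nonneg_eq_0_iff_AE[OF int] nn by auto
  then obtain N where N: "{x \<in> space lborel. \<not> f x = 0} \<subseteq> N" "emeasure lborel N = 0" "N \<in> sets lborel"
    by (rule AE_E)
  have "{a<..<b} \<subseteq> N" using N(1) pos by force
  then have "emeasure lborel {a<..<b} \<le> emeasure lborel N" by (intro emeasure_mono N(3))
  then show False using N(2) ab by simp
qed

lemma tendsto_Gamma_real:
  fixes f :: "'a \<Rightarrow> real"
  assumes "(f \<longlongrightarrow> a) F" "a > 0"
  shows "((\<lambda>x. Gamma (f x)) \<longlongrightarrow> Gamma a) F"
proof -
  have "a \<notin> \<int>\<^sub>\<le>\<^sub>0" using assms(2) by (auto dest: nonpos_Ints_nonpos)
  then have "isCont (\<lambda>x. Gamma x) a" by (intro isCont_Gamma continuous_ident)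
  then show ?thesis using assms(1) by (rule isCont_tendsto_compose)
qed

lemma Beta_pos: "a > 0 \<Longrightarrow> b > 0 \<Longrightarrow> Beta a b > (0::real)"
  by (simp add: Beta_def)

lemma tendsto_Beta_real:
  fixes f g :: "'a \<Rightarrow> real"
  assumes "(f \<longlongrightarrow> a) F" "(g \<longlongrightarrow> b) F" "a > 0" "b > 0"
  shows "((\<lambda>x. Beta (f x) (g x)) \<longlongrightarrow> Beta a b) F"
proof -
  have "Gamma (a + b) > 0" using assms by (intro Gamma_real_pos) simp
  then have G: "Gamma (a + b) \<noteq> 0" by simp
  show ?thesis
    unfolding Beta_def using assms G
    by (intro tendsto_divide tendsto_mult tendsto_Gamma_real tendsto_add) auto
qed

section \<open>The F distribution\<close>

text \<open>The F density is dominated, uniformly over degrees of freedom \<open>n1 \<ge> 2\<close>, \<open>n2 \<ge> 1\<close>,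
  by a constant times the fixed integrable profile \<open>F_profile\<close> (bounded near \<open>0\<close>,
  decaying like \<open>u powr (-3/2)\<close> at infinity).\<close>

definition F_const :: "real \<Rightarrow> real \<Rightarrow> real" where
  "F_const n1 n2 = (n1 / n2) powr (n1 / 2) / Beta (n1 / 2) (n2 / 2)"

definition F_dom_const :: "real \<Rightarrow> real \<Rightarrow> real" where
  "F_dom_const n1 n2 = F_const n1 n2 * (1 + (n1 / n2) powr (- (n1 + n2) / 2))"

definition F_profile :: "real \<Rightarrow> real" where
  "F_profile u = indicator {0<..1} u + indicator {1..} u * u powr (-3/2)"

definition F_profile_integral :: real where
  "F_profile_integral = integral\<^sup>L lborel F_profile"

lemma F_const_nonneg: "n1 > 0 \<Longrightarrow> n2 > 0 \<Longrightarrow> 0 \<le> F_const n1 n2"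
  unfolding F_const_def using Beta_pos[of "n1/2" "n2/2"] by simp

lemma F_dom_const_nonneg: "n1 > 0 \<Longrightarrow> n2 > 0 \<Longrightarrow> 0 \<le> F_dom_const n1 n2"
  unfolding F_dom_const_def using F_const_nonneg[of n1 n2] by simp

lemma F_profile_nonneg: "0 \<le> F_profile u"
  by (simp add: F_profile_def)

lemma F_profile_measurable [measurable]: "F_profile \<in> borel_measurable borel"
  unfolding F_profile_def by measurable

lemma F_profile_integrable: "integrable lborel F_profile"
  unfolding F_profile_def[abs_def]
  by (intro Bochner_Integration.integrable_add integrable_powr_atLeast1 integrable_real_indicator) auto

lemma F_profile_integral_nonneg: "0 \<le> F_profile_integral"
  unfolding F_profile_integral_def using F_profile_nonneg by (intro integral_nonneg_AE AE_I2) auto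

lemma F_density_alt: "0 < u \<Longrightarrow> F_density u n1 n2 =
   F_const n1 n2 * (u powr (n1/2 - 1) * (1 + n1 * u / n2) powr (- (n1 + n2) / 2))"
  by (simp add: F_density_def F_const_def)

lemma F_density_nonneg: "n1 > 0 \<Longrightarrow> n2 > 0 \<Longrightarrow> 0 \<le> F_density u n1 n2"
  using Beta_pos[of "n1/2" "n2/2"] by (simp add: F_density_def divide_nonneg_pos)

lemma F_density_measurable [measurable]: "(\<lambda>u. F_density u n1 n2) \<in> borel_measurable borel"
  unfolding F_density_def by measurable

lemma F_density_le_near_0:
  assumes n1: "n1 \<ge> 2" and n2: "n2 > 0" and u: "0 < u" "u \<le> 1"
  shows "F_density u n1 n2 \<le> F_const n1 n2"
proof -
  have "u powr (n1/2 - 1) \<le> 1" using u n1 by (intro powr_le1) auto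
  moreover have "(1 + n1 * u / n2) powr (- (n1 + n2) / 2) \<le> 1 powr (- (n1 + n2) / 2)"
    using u n1 n2 by (intro powr_mono2') auto
  ultimately have "u powr (n1/2 - 1) * (1 + n1 * u / n2) powr (- (n1 + n2) / 2) \<le> 1 * 1"
    by (intro mult_mono) auto
  then show ?thesis
    using u F_const_nonneg[of n1 n2] n1 n2 by (simp add: F_density_alt mult_left_le)
qed

text \<open>At infinity the F density decays like \<open>u powr (n1/2 - 1 - (n1 + n2)/2) \<le> u powr (-3/2)\<close>.\<close>
lemma F_density_le_tail:
  assumes n1: "n1 \<ge> 2" and n2: "n2 \<ge> 1" and u: "1 < u"
  shows "F_density u n1 n2 \<le> F_const n1 n2 * ((n1 / n2) powr (- (n1 + n2) / 2) * u powr (-3/2))"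
proof -
  define e where "e = - (n1 + n2) / 2"
  have e0: "e \<le> 0" using n1 n2 by (simp add: e_def)
  have "(1 + n1 * u / n2) powr e \<le> (n1 * u / n2) powr e"
    using u n1 n2 by (intro powr_mono2'[OF e0]) auto
  also have "(n1 * u / n2) powr e = (n1 / n2) powr e * u powr e"
    using u n1 n2 by (simp add: powr_mult[symmetric])
  finally have "u powr (n1/2 - 1) * (1 + n1 * u / n2) powr e
      \<le> u powr (n1/2 - 1) * ((n1 / n2) powr e * u powr e)"
    by (rule mult_left_mono) simp
  also have "\<dots> = (n1 / n2) powr e * u powr (n1/2 - 1 + e)"
    by (simp add: powr_add)
  also have "\<dots> \<le> (n1 / n2) powr e * u powr (-3/2)"
    using u n2 by (intro mult_left_mono powr_mono) (auto simp: e_def field_simps)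
  finally show ?thesis
    using u n1 n2 F_const_nonneg[of n1 n2]
    by (simp add: F_density_alt e_def mult_left_mono)
qed

lemma F_density_le_profile:
  assumes n1: "n1 \<ge> 2" and n2: "n2 \<ge> 1"
  shows "F_density u n1 n2 \<le> F_dom_const n1 n2 * F_profile u"
proof -
  have c0: "0 \<le> F_const n1 n2" using F_const_nonneg[of n1 n2] n1 n2 by simp
  consider "u \<le> 0" | "0 < u" "u \<le> 1" | "1 < u" by fastforce
  then show ?thesis
  proof cases
    case 1
    then show ?thesis using F_dom_const_nonneg[of n1 n2] F_profile_nonneg[of u] n1 n2
      by (simp add: F_density_def)
  next
    case 2
    then have "F_density u n1 n2 \<le> F_const n1 n2" using n1 n2 by (intro F_density_le_near_0) auto
    also have "\<dots> \<le> F_dom_const n1 n2" using c0 by (simp add: F_dom_const_def mult_le_cancel_left1)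
    also have "\<dots> \<le> F_dom_const n1 n2 * F_profile u"
      using 2 F_dom_const_nonneg[of n1 n2] n1 n2 by (simp add: F_profile_def mult_le_cancel_left1)
    finally show ?thesis .
  next
    case 3
    have "F_density u n1 n2 \<le> F_const n1 n2 * ((n1 / n2) powr (- (n1 + n2) / 2) * u powr (-3/2))"
      by (rule F_density_le_tail[OF n1 n2 3])
    also have "\<dots> \<le> F_dom_const n1 n2 * u powr (-3/2)"
      unfolding F_dom_const_def mult.assoc using c0 by (intro mult_left_mono mult_right_mono) auto
    finally show ?thesis using 3 by (simp add: F_profile_def)
  qed
qed

lemma F_cdf_integrand_integrable:
  assumes "n1 \<ge> 2" "n2 \<ge> 1"
  shows "integrable lborel (\<lambda>u. indicator {..x} u * F_density u n1 n2)"
proof (rule Bochner_Integration.integrable_bound)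
  show "integrable lborel (\<lambda>u. F_dom_const n1 n2 * F_profile u)"
    using F_profile_integrable by simp
  show "(\<lambda>u. indicator {..x} u * F_density u n1 n2) \<in> borel_measurable lborel"
    by measurable
  show "AE u in lborel. norm (indicator {..x} u * F_density u n1 n2)
      \<le> norm (F_dom_const n1 n2 * F_profile u)"
    using F_density_le_profile[OF assms] F_density_nonneg[of n1 n2] assms
      F_dom_const_nonneg[of n1 n2] F_profile_nonneg
    by (intro AE_I2) (auto simp: indicator_def)
qed

lemma F_cdf_eq: "F_cdf x n1 n2 = integral\<^sup>L lborel (\<lambda>u. indicator {..x} u * F_density u n1 n2)"
  by (simp add: F_cdf_def set_lebesgue_integral_def)

lemma F_cdf_nonneg: "n1 \<ge> 2 \<Longrightarrow> n2 \<ge> 1 \<Longrightarrow> 0 \<le> F_cdf x n1 n2"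
  unfolding F_cdf_eq
  using F_density_nonneg[of n1 n2] by (intro integral_nonneg_AE AE_I2) (auto simp: indicator_def)

lemma F_cdf_le:
  assumes "n1 \<ge> 2" "n2 \<ge> 1"
  shows "F_cdf x n1 n2 \<le> F_dom_const n1 n2 * F_profile_integral"
proof -
  have "F_cdf x n1 n2 \<le> integral\<^sup>L lborel (\<lambda>u. F_dom_const n1 n2 * F_profile u)"
    unfolding F_cdf_eq
    using F_density_le_profile[OF assms] F_density_nonneg[of n1 n2] assms
      F_dom_const_nonneg[of n1 n2] F_profile_nonneg
    by (intro integral_mono F_cdf_integrand_integrable[OF assms])
       (auto simp: F_profile_integrable indicator_def)
  then show ?thesis by (simp add: F_profile_integral_def)
qed

lemma F_cdf_pos:
  assumes n1: "n1 \<ge> 2" and n2: "n2 \<ge> 1" and x: "x > 0"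
  shows "0 < F_cdf x n1 n2"
  unfolding F_cdf_eq
proof (rule integral_pos_interval[OF F_cdf_integrand_integrable[OF n1 n2] _ _ x])
  show "0 \<le> indicator {..x} u * F_density u n1 n2" for u
    using F_density_nonneg[of n1 n2] n1 n2 by (auto simp: indicator_def)
  show "0 < indicator {..x} u * F_density u n1 n2" if u: "0 < u" "u < x" for u
  proof -
    have "0 < 1 + n1 * u / n2" using u n1 n2 by (simp add: add_pos_pos)
    then show ?thesis
      using u n1 n2 Beta_pos[of "n1/2" "n2/2"] by (simp add: F_density_def indicator_def)
  qed
qed

lemma tendsto_F_const:
  fixes f g :: "'a \<Rightarrow> real"
  assumes "(f \<longlongrightarrow> a) F" "(g \<longlongrightarrow> b) F" "a > 0" "b > 0"
  shows "((\<lambda>x. F_const (f x) (g x)) \<longlongrightarrow> F_const a b) F"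
  unfolding F_const_def using assms Beta_pos[of "a/2" "b/2"]
  by (intro tendsto_divide tendsto_powr tendsto_Beta_real tendsto_intros) auto

lemma tendsto_F_dom_const:
  fixes f g :: "'a \<Rightarrow> real"
  assumes "(f \<longlongrightarrow> a) F" "(g \<longlongrightarrow> b) F" "a > 0" "b > 0"
  shows "((\<lambda>x. F_dom_const (f x) (g x)) \<longlongrightarrow> F_dom_const a b) F"
  unfolding F_dom_const_def using assms
  by (intro tendsto_mult tendsto_F_const tendsto_intros) auto

lemma tendsto_F_cdf_integrand:
  assumes X: "(X \<longlongrightarrow> x) F" and A: "(A \<longlongrightarrow> n1) F" and B: "(B \<longlongrightarrow> n2) F"
    and n1: "2 \<le> n1" and n2: "1 \<le> n2" and ux: "u \<noteq> x"
  shows "((\<lambda>i. indicator {..X i} u * F_density u (A i) (B i))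
    \<longlongrightarrow> indicator {..x} u * F_density u n1 n2) F"
proof -
  have ind: "\<forall>\<^sub>F i in F. indicator {..X i} u = (indicator {..x} u :: real)"
  proof (cases "u < x")
    case True
    from order_tendstoD(1)[OF X True] show ?thesis
      by eventually_elim (use True in \<open>auto simp: indicator_def\<close>)
  next
    case False
    with ux have "x < u" by simp
    from order_tendstoD(2)[OF X this] show ?thesis
      by eventually_elim (use \<open>x < u\<close> in \<open>auto simp: indicator_def\<close>)
  qed
  have dens: "((\<lambda>i. F_density u (A i) (B i)) \<longlongrightarrow> F_density u n1 n2) F"
  proof (cases "0 < u")
    case True
    then have "0 < 1 + n1 * u / n2" using n1 n2 by (simp add: add_pos_pos)
    with True n1 n2 show ?thesis
      by (simp add: F_density_alt)
         (intro tendsto_mult tendsto_F_const tendsto_powr A B tendsto_intros; simp)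
  qed (simp add: F_density_def)
  show ?thesis using tendsto_mult[OF tendsto_eventually[OF ind] dens] by simp
qed

text \<open>Joint continuity of the F distribution function in the point and both degrees of
  freedom, by dominated convergence with majorant a multiple of \<open>F_profile\<close>.\<close>
lemma F_cdf_continuous: "continuous_on (UNIV \<times> {2..} \<times> {1..}) (\<lambda>(x, n1, n2). F_cdf x n1 n2)"
  unfolding continuous_on_def
proof (safe)
  fix x n1 n2 :: real assume n1: "2 \<le> n1" and n2: "1 \<le> n2"
  let ?D = "UNIV \<times> {2..} \<times> {1..} :: (real \<times> real \<times> real) set"
  let ?F = "at (x, n1, n2) within ?D"
  let ?s = "\<lambda>\<theta> u. indicator {..fst \<theta>} u * F_density u (fst (snd \<theta>)) (snd (snd \<theta>))"
  have X: "(fst \<longlongrightarrow> x) ?F" and A: "((\<lambda>\<theta>. fst (snd \<theta>)) \<longlongrightarrow> n1) ?F"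
    and B: "((\<lambda>\<theta>. snd (snd \<theta>)) \<longlongrightarrow> n2) ?F"
    by (auto intro!: tendsto_eq_intros tendsto_ident_at)
  text \<open>The constant \<open>F_dom_const\<close> is continuous, hence locally bounded.\<close>
  have "\<forall>\<^sub>F \<theta> in ?F. F_dom_const (fst (snd \<theta>)) (snd (snd \<theta>)) < F_dom_const n1 n2 + 1"
    using n1 n2 by (intro order_tendstoD(2)[OF tendsto_F_dom_const[OF A B]]) auto
  moreover have "\<forall>\<^sub>F \<theta> in ?F. \<theta> \<in> ?D" by (simp add: eventually_at_filter)
  ultimately have bound: "\<forall>\<^sub>F \<theta> in ?F. \<forall>u. \<bar>?s \<theta> u\<bar> \<le> (F_dom_const n1 n2 + 1) * F_profile u"
  proof eventually_elim
    case (elim \<theta>)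
    show ?case
    proof
      fix u
      have "\<bar>?s \<theta> u\<bar> \<le> F_dom_const (fst (snd \<theta>)) (snd (snd \<theta>)) * F_profile u"
        using elim(2) F_density_le_profile F_density_nonneg[of "fst (snd \<theta>)" "snd (snd \<theta>)" u]
          F_dom_const_nonneg F_profile_nonneg[of u]
        by (auto simp: indicator_def mem_Times_iff intro: order_trans[of _ 0])
      also have "\<dots> \<le> (F_dom_const n1 n2 + 1) * F_profile u"
        using elim(1) F_profile_nonneg[of u] by (intro mult_right_mono) auto
      finally show "\<bar>?s \<theta> u\<bar> \<le> (F_dom_const n1 n2 + 1) * F_profile u" .
    qed
  qed
  have "((\<lambda>\<theta>. integral\<^sup>L lborel (?s \<theta>)) \<longlongrightarrow> integral\<^sup>L lborel (?s (x, n1, n2))) ?F"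
  proof (rule tendsto_integral_dominated[OF _ _ _ _ bound])
    show "integrable lborel (\<lambda>u. (F_dom_const n1 n2 + 1) * F_profile u)"
      using F_profile_integrable by simp
    show "AE u in lborel. ((\<lambda>\<theta>. ?s \<theta> u) \<longlongrightarrow> ?s (x, n1, n2) u) ?F"
      using AE_lborel_singleton[of x]
      by eventually_elim (use n1 n2 in \<open>auto intro!: tendsto_F_cdf_integrand X A B\<close>)
  qed measurable
  then show "((\<lambda>(x, n1, n2). F_cdf x n1 n2) \<longlongrightarrow> F_cdf x n1 n2) ?F"
    by (simp add: F_cdf_eq case_prod_beta')
qed

lemma tendsto_F_cdf:
  assumes "(X \<longlongrightarrow> x) F" "(A \<longlongrightarrow> n1) F" "(B \<longlongrightarrow> n2) F"
    and "\<forall>\<^sub>F i in F. 2 \<le> A i \<and> 1 \<le> B i" and "2 \<le> n1" "1 \<le> n2"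
  shows "((\<lambda>i. F_cdf (X i) (A i) (B i)) \<longlongrightarrow> F_cdf x n1 n2) F"
proof -
  have "((\<lambda>i. (\<lambda>(x, n1, n2). F_cdf x n1 n2) (X i, A i, B i))
      \<longlongrightarrow> (\<lambda>(x, n1, n2). F_cdf x n1 n2) (x, n1, n2)) F"
    by (rule continuous_on_tendsto_compose[OF F_cdf_continuous])
       (use assms in \<open>auto intro!: tendsto_Pair simp: mem_Times_iff\<close>)
  then show ?thesis by simp
qed

lemma F_cdf_measurable [measurable]:
  assumes "2 \<le> n1" "1 \<le> n2"
  shows "(\<lambda>x. F_cdf x n1 n2) \<in> borel_measurable borel"
  using assms
  by (intro borel_measurable_continuous_onI continuous_on_sequentiallyI)
     (auto intro!: tendsto_F_cdf simp: comp_def)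

section \<open>The Student t density\<close>

text \<open>\<open>t_const\<close> is the normalising constant of the t density; the Cauchy kernel of scale \<open>N\<close>
  serves as its integrable majorant.\<close>
definition t_const :: "real \<Rightarrow> real" where
  "t_const nu = Gamma ((nu + 1) / 2) / (sqrt (nu * pi) * Gamma (nu / 2))"

definition cauchy_kernel :: "real \<Rightarrow> real \<Rightarrow> real" where
  "cauchy_kernel N t = 1 / (1 + t\<^sup>2 / N)"

lemma student_t_density_alt:
  "student_t_density t nu = t_const nu * (1 + t\<^sup>2 / nu) powr (- (nu + 1) / 2)"
  by (simp add: student_t_density_def t_const_def)

lemma t_const_pos: "nu > 0 \<Longrightarrow> 0 < t_const nu"
  using Gamma_real_pos[of "(nu + 1) / 2"] Gamma_real_pos[of "nu / 2"]
  by (simp add: t_const_def)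

lemma student_t_density_pos:
  assumes "nu > 0" shows "0 < student_t_density t nu"
proof -
  have "0 < 1 + t\<^sup>2 / nu" using assms by (intro add_pos_nonneg) auto
  then show ?thesis using t_const_pos[OF assms] by (simp add: student_t_density_alt)
qed

lemma student_t_density_measurable [measurable]:
  "(\<lambda>t. student_t_density t nu) \<in> borel_measurable borel"
  unfolding student_t_density_def by measurable

lemma student_t_density_le_cauchy:
  assumes nu1: "nu \<ge> 1" and nuN: "nu \<le> N"
  shows "student_t_density t nu \<le> t_const nu * cauchy_kernel N t"
proof -
  define b where "b = 1 + t\<^sup>2 / nu"
  have b1: "1 \<le> b" using nu1 by (simp add: b_def)
  have "b powr (- (nu + 1) / 2) \<le> b powr (-1)"
    by (rule powr_mono) (use nu1 b1 in auto)
  also have "b powr (-1) = 1 / b" using b1 by (simp add: powr_minus divide_inverse)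
  also have "1 / b \<le> cauchy_kernel N t"
    unfolding cauchy_kernel_def
  proof (rule divide_left_mono)
    have "t\<^sup>2 / N \<le> t\<^sup>2 / nu" using nu1 nuN by (intro divide_left_mono) auto
    then show "1 + t\<^sup>2 / N \<le> b" by (simp add: b_def)
    show "0 < b * (1 + t\<^sup>2 / N)" using b1 nu1 nuN by (intro mult_pos_pos) (auto simp: add_pos_nonneg)
  qed simp
  finally show ?thesis unfolding student_t_density_alt b_def[symmetric]
    using t_const_pos[of nu] nu1 by (intro mult_left_mono) auto
qed

lemma tendsto_t_const:
  fixes f :: "'a \<Rightarrow> real"
  assumes f: "(f \<longlongrightarrow> nu) F" and nu: "nu > 0"
  shows "((\<lambda>x. t_const (f x)) \<longlongrightarrow> t_const nu) F"
proof -
  have "Gamma (nu / 2) > 0" using nu by (intro Gamma_real_pos) simp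
  then have "0 < sqrt (nu * pi) * Gamma (nu / 2)" by (intro mult_pos_pos) (use nu in simp)
  then have G: "sqrt (nu * pi) * Gamma (nu / 2) \<noteq> 0" by linarith
  show ?thesis unfolding t_const_def using f nu G
    by (intro tendsto_divide tendsto_mult tendsto_Gamma_real tendsto_intros) auto
qed

lemma tendsto_student_t_density:
  fixes f :: "'a \<Rightarrow> real"
  assumes f: "(f \<longlongrightarrow> nu) F" and nu: "nu > 0"
  shows "((\<lambda>x. student_t_density t (f x)) \<longlongrightarrow> student_t_density t nu) F"
proof -
  have "0 < 1 + t\<^sup>2 / nu" using nu by (intro add_pos_nonneg) auto
  then have pos: "1 + t\<^sup>2 / nu \<noteq> 0" by simp
  show ?thesis unfolding student_t_density_alt
    using nu pos by (intro tendsto_mult tendsto_t_const[OF f nu] tendsto_powr tendsto_intros f) auto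
qed

lemma cauchy_kernel_integrable:
  assumes N: "N > 0" shows "integrable lborel (cauchy_kernel N)"
proof -
  have "integrable lborel (\<lambda>x. (\<lambda>x::real. 1 / (1 + x\<^sup>2)) (0 + (1 / sqrt N) * x))"
    by (rule lborel_integrable_real_affine[OF integrable_inv_1_plus_sq]) (use N in simp)
  moreover have "(\<lambda>x::real. 1 / (1 + x\<^sup>2)) (0 + (1 / sqrt N) * x) = cauchy_kernel N x" for x
    using N by (simp add: cauchy_kernel_def power_divide)
  ultimately show ?thesis by simp
qed

lemma cauchy_kernel_nonneg: "N > 0 \<Longrightarrow> 0 \<le> cauchy_kernel N t"
  by (simp add: cauchy_kernel_def add_nonneg_nonneg)

lemma cauchy_kernel_measurable [measurable]: "cauchy_kernel N \<in> borel_measurable borel"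
  unfolding cauchy_kernel_def[abs_def] by measurable

section \<open>The integral \<open>I\<close>\<close>

definition I_integrand :: "real \<Rightarrow> real \<Rightarrow> real \<Rightarrow> real \<Rightarrow> real" where
  "I_integrand bt nu r t = indicator {t_minus nu r .. t_plus bt nu r} t *
     (student_t_density t nu * F_cdf (Ffun t bt nu r) (nu + 1) (nu - 1))"

lemma Ifun_eq: "Ifun bt nu r = integral\<^sup>L lborel (I_integrand bt nu r)"
  unfolding Ifun_def set_lebesgue_integral_def I_integrand_def by simp

lemma Ffun_measurable [measurable]: "(\<lambda>t. Ffun t bt nu r) \<in> borel_measurable borel"
  unfolding Ffun_def by measurable

lemma I_integrand_measurable:
  assumes nu: "nu \<ge> 2" shows "I_integrand bt nu r \<in> borel_measurable borel"
proof -
  have [measurable]: "(\<lambda>x. F_cdf x (nu + 1) (nu - 1)) \<in> borel_measurable borel"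
    by (rule F_cdf_measurable) (use nu in auto)
  show ?thesis unfolding I_integrand_def[abs_def] by measurable
qed

lemma I_integrand_nonneg: "nu \<ge> 2 \<Longrightarrow> 0 \<le> I_integrand bt nu r t"
  unfolding I_integrand_def
  using student_t_density_pos[of nu t] F_cdf_nonneg[of "nu + 1" "nu - 1"]
  by (simp add: indicator_def)

lemma I_integrand_le:
  assumes nu: "nu \<ge> 2" and N: "nu \<le> N"
  shows "I_integrand bt nu r t
    \<le> t_const nu * F_dom_const (nu + 1) (nu - 1) * F_profile_integral * cauchy_kernel N t"
proof -
  have "student_t_density t nu * F_cdf (Ffun t bt nu r) (nu + 1) (nu - 1)
        \<le> (t_const nu * cauchy_kernel N t) * (F_dom_const (nu + 1) (nu - 1) * F_profile_integral)"
    using nu N student_t_density_pos[of nu t] F_cdf_nonneg[of "nu+1" "nu-1"]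
      t_const_pos[of nu] cauchy_kernel_nonneg[of N t]
    by (intro mult_mono student_t_density_le_cauchy F_cdf_le) auto
  moreover have "0 \<le> student_t_density t nu * F_cdf (Ffun t bt nu r) (nu + 1) (nu - 1)"
    using student_t_density_pos[of nu t] F_cdf_nonneg[of "nu+1" "nu-1"] nu by simp
  ultimately show ?thesis unfolding I_integrand_def by (auto simp: indicator_def algebra_simps)
qed

lemma I_integrand_locally_dominated:
  assumes nu: "2 \<le> nu"
  obtains K where "\<forall>\<^sub>F nu' in nhds nu. \<forall>bt r t. 2 \<le> nu' \<longrightarrow>
    I_integrand bt nu' r t \<le> K * cauchy_kernel (nu + 1) t"
proof
  define c where "c nu' = t_const nu' * F_dom_const (nu' + 1) (nu' - 1)" for nu'
  have id: "((\<lambda>x. x) \<longlongrightarrow> nu) (nhds nu)" by (rule filterlim_ident)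
  have "(c \<longlongrightarrow> c nu) (nhds nu)"
    unfolding c_def using nu
    by (intro tendsto_mult tendsto_t_const tendsto_F_dom_const tendsto_intros id) auto
  then have "\<forall>\<^sub>F nu' in nhds nu. c nu' < c nu + 1"
    by (rule order_tendstoD(2)) simp
  moreover have "\<forall>\<^sub>F nu' in nhds nu. nu' < nu + 1"
    using order_tendstoD(2)[OF id, of "nu + 1"] by simp
  ultimately show "\<forall>\<^sub>F nu' in nhds nu. \<forall>bt r t. 2 \<le> nu' \<longrightarrow>
      I_integrand bt nu' r t \<le> ((c nu + 1) * F_profile_integral) * cauchy_kernel (nu + 1) t"
  proof eventually_elim
    case (elim nu')
    show ?case
    proof (intro allI impI)
      fix bt r t assume nu': "2 \<le> nu'"
      have "I_integrand bt nu' r t \<le> c nu' * F_profile_integral * cauchy_kernel (nu + 1) t"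
        unfolding c_def using I_integrand_le[OF nu'] elim by simp
      also have "\<dots> \<le> ((c nu + 1) * F_profile_integral) * cauchy_kernel (nu + 1) t"
        using elim nu F_profile_integral_nonneg cauchy_kernel_nonneg[of "nu + 1" t]
        by (intro mult_right_mono) auto
      finally show "I_integrand bt nu' r t \<le> ((c nu + 1) * F_profile_integral) * cauchy_kernel (nu + 1) t" .
    qed
  qed
qed

lemma I_integrand_integrable:
  assumes nu: "nu \<ge> 2" shows "integrable lborel (I_integrand bt nu r)"
proof (rule Bochner_Integration.integrable_bound)
  let ?w = "\<lambda>t. t_const nu * F_dom_const (nu + 1) (nu - 1) * F_profile_integral * cauchy_kernel nu t"
  show "integrable lborel ?w" using cauchy_kernel_integrable[of nu] nu by simp
  show "I_integrand bt nu r \<in> borel_measurable lborel" using I_integrand_measurable[OF nu] by simp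
  show "AE t in lborel. norm (I_integrand bt nu r t) \<le> norm (?w t)"
    using I_integrand_le[OF nu order_refl] I_integrand_nonneg[OF nu]
    by (intro AE_I2) (auto intro: order_trans[OF _ abs_ge_self])
qed

lemma Ifun_nonneg: "nu \<ge> 2 \<Longrightarrow> 0 \<le> Ifun bt nu r"
  unfolding Ifun_eq using I_integrand_nonneg by (intro integral_nonneg_AE AE_I2) auto

lemma sqrt_1_minus_sq_pos: "\<bar>r\<bar> < 1 \<Longrightarrow> 0 < sqrt (1 - r\<^sup>2)"
  by (simp add: abs_square_less_1)

lemma tendsto_t_minus:
  fixes NU R :: "'a \<Rightarrow> real"
  assumes "(NU \<longlongrightarrow> nu) F" "(R \<longlongrightarrow> r) F" "\<bar>r\<bar> < 1"
  shows "((\<lambda>i. t_minus (NU i) (R i)) \<longlongrightarrow> t_minus nu r) F"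
  unfolding t_minus_def using assms sqrt_1_minus_sq_pos[OF assms(3)]
  by (intro tendsto_intros) auto

lemma tendsto_t_plus:
  fixes BT NU R :: "'a \<Rightarrow> real"
  assumes "(BT \<longlongrightarrow> bt) F" "(NU \<longlongrightarrow> nu) F" "(R \<longlongrightarrow> r) F" "\<bar>r\<bar> < 1"
  shows "((\<lambda>i. t_plus (BT i) (NU i) (R i)) \<longlongrightarrow> t_plus bt nu r) F"
  unfolding t_plus_def using assms sqrt_1_minus_sq_pos[OF assms(4)]
  by (intro tendsto_intros) auto

lemma t_minus_less_t_plus:
  assumes "bt > 0" "nu > 0" "\<bar>r\<bar> < 1"
  shows "t_minus nu r < t_plus bt nu r"
  unfolding t_minus_def t_plus_def using assms sqrt_1_minus_sq_pos[OF assms(3)]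
  by (intro divide_strict_right_mono) (auto simp: algebra_simps)

lemma Ffun_denominator_pos:
  assumes "t_minus nu r < t" "t < t_plus bt nu r"
  shows "0 < (t_plus bt nu r - t_minus nu r)\<^sup>2 - (t - t_minus nu r)\<^sup>2"
proof -
  have "(t_plus bt nu r - t_minus nu r)\<^sup>2 - (t - t_minus nu r)\<^sup>2
      = (t_plus bt nu r - t) * (t_plus bt nu r + t - 2 * t_minus nu r)"
    by (simp add: power2_eq_square algebra_simps)
  also have "\<dots> > 0" using assms by (intro mult_pos_pos) auto
  finally show ?thesis .
qed

lemma Ffun_pos:
  assumes nu: "nu \<ge> 2" and t: "t_minus nu r < t" "t < t_plus bt nu r"
  shows "0 < Ffun t bt nu r"
  unfolding Ffun_def using nu Ffun_denominator_pos[OF t]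
  by (intro divide_pos_pos mult_pos_pos) (auto simp: add_pos_nonneg)

lemma tendsto_Ffun:
  assumes BT: "(BT \<longlongrightarrow> bt) F" and NU: "(NU \<longlongrightarrow> nu) F" and R: "(R \<longlongrightarrow> r) F"
    and nu: "0 < nu" and r: "\<bar>r\<bar> < 1" and t: "t_minus nu r < t" "t < t_plus bt nu r"
  shows "((\<lambda>y. Ffun t (BT y) (NU y) (R y)) \<longlongrightarrow> Ffun t bt nu r) F"
  unfolding Ffun_def using Ffun_denominator_pos[OF t] nu
  by (intro tendsto_divide tendsto_mult tendsto_diff tendsto_power tendsto_t_minus[OF NU R r]
      tendsto_t_plus[OF BT NU R r] NU tendsto_intros) auto

text \<open>\<open>I\<close> is positive for \<open>bt > 0\<close>, as its integrand is positive inside a nondegenerate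
  interval.\<close>
lemma Ifun_pos:
  assumes bt: "bt > 0" and nu: "nu \<ge> 2" and r: "\<bar>r\<bar> < 1"
  shows "0 < Ifun bt nu r"
  unfolding Ifun_eq
proof (rule integral_pos_interval[OF I_integrand_integrable[OF nu] I_integrand_nonneg[OF nu]])
  show "t_minus nu r < t_plus bt nu r" using t_minus_less_t_plus[OF bt _ r] nu by simp
  fix t assume t: "t_minus nu r < t" "t < t_plus bt nu r"
  have "0 < F_cdf (Ffun t bt nu r) (nu + 1) (nu - 1)"
    using nu Ffun_pos[OF nu t] by (intro F_cdf_pos) auto
  moreover have "0 < student_t_density t nu" using nu by (intro student_t_density_pos) simp
  ultimately show "0 < I_integrand bt nu r t" using t by (simp add: I_integrand_def)
qed

lemma tendsto_I_integrand:
  assumes BT: "(BT \<longlongrightarrow> bt) F" and NU: "(NU \<longlongrightarrow> nu) F" and R: "(R \<longlongrightarrow> r) F"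
    and NU2: "\<forall>\<^sub>F y in F. 2 \<le> NU y" and nu: "2 \<le> nu" and r: "\<bar>r\<bar> < 1"
    and t: "t \<noteq> t_minus nu r" "t \<noteq> t_plus bt nu r"
  shows "((\<lambda>y. I_integrand (BT y) (NU y) (R y) t) \<longlongrightarrow> I_integrand bt nu r t) F"
proof -
  have tm: "((\<lambda>y. t_minus (NU y) (R y)) \<longlongrightarrow> t_minus nu r) F" by (rule tendsto_t_minus[OF NU R r])
  have tp: "((\<lambda>y. t_plus (BT y) (NU y) (R y)) \<longlongrightarrow> t_plus bt nu r) F"
    by (rule tendsto_t_plus[OF BT NU R r])
  consider "t < t_minus nu r" | "t_plus bt nu r < t" | "t_minus nu r < t \<and> t < t_plus bt nu r"
    using t by fastforce
  then show ?thesis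
  proof cases
    case 1
    from order_tendstoD(1)[OF tm 1] have "\<forall>\<^sub>F y in F. I_integrand (BT y) (NU y) (R y) t = 0"
      by eventually_elim (simp add: I_integrand_def)
    then show ?thesis using 1 by (simp add: I_integrand_def tendsto_eventually)
  next
    case 2
    from order_tendstoD(2)[OF tp 2] have "\<forall>\<^sub>F y in F. I_integrand (BT y) (NU y) (R y) t = 0"
      by eventually_elim (simp add: I_integrand_def)
    then show ?thesis using 2 by (simp add: I_integrand_def tendsto_eventually)
  next
    case 3
    have "\<forall>\<^sub>F y in F. t_minus (NU y) (R y) < t \<and> t < t_plus (BT y) (NU y) (R y)"
      using 3 by (intro eventually_conj order_tendstoD(2)[OF tm] order_tendstoD(1)[OF tp]) auto
    then have "\<forall>\<^sub>F y in F. student_t_density t (NU y) * F_cdf (Ffun t (BT y) (NU y) (R y)) (NU y + 1) (NU y - 1)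
        = I_integrand (BT y) (NU y) (R y) t"
      by eventually_elim (simp add: I_integrand_def)
    moreover have "((\<lambda>y. student_t_density t (NU y) * F_cdf (Ffun t (BT y) (NU y) (R y)) (NU y + 1) (NU y - 1))
        \<longlongrightarrow> student_t_density t nu * F_cdf (Ffun t bt nu r) (nu + 1) (nu - 1)) F"
      using nu NU2 3
      by (intro tendsto_mult tendsto_student_t_density[OF NU] tendsto_F_cdf tendsto_Ffun[OF BT NU R _ r]
          tendsto_intros NU) (auto elim: eventually_mono)
    ultimately show ?thesis
      using 3 by (auto simp: I_integrand_def intro: Lim_transform_eventually)
  qed
qed

text \<open>Joint continuity of \<open>I\<close> in \<open>(bt, nu, r)\<close> for \<open>nu \<ge> 2\<close>, \<open>\<bar>r\<bar> < 1\<close>, by dominated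
  convergence with the locally uniform Cauchy majorant.\<close>
lemma Ifun_continuous:
  "continuous_on (UNIV \<times> {2..} \<times> {-1<..<1}) (\<lambda>(bt, nu, r). Ifun bt nu r)"
  unfolding continuous_on_def
proof (safe)
  fix bt nu r :: real assume nu: "2 \<le> nu" and r: "r \<in> {-1<..<1}"
  let ?D = "UNIV \<times> {2..} \<times> {-1<..<1} :: (real \<times> real \<times> real) set"
  let ?F = "at (bt, nu, r) within ?D"
  let ?s = "\<lambda>\<theta>. I_integrand (fst \<theta>) (fst (snd \<theta>)) (snd (snd \<theta>))"
  have BT: "(fst \<longlongrightarrow> bt) ?F" and NU: "((\<lambda>\<theta>. fst (snd \<theta>)) \<longlongrightarrow> nu) ?F"
    and R: "((\<lambda>\<theta>. snd (snd \<theta>)) \<longlongrightarrow> r) ?F"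
    by (auto intro!: tendsto_eq_intros tendsto_ident_at)
  have in_D: "\<forall>\<^sub>F \<theta> in ?F. \<theta> \<in> ?D" by (simp add: eventually_at_filter)
  then have NU2: "\<forall>\<^sub>F \<theta> in ?F. 2 \<le> fst (snd \<theta>)" by eventually_elim (auto simp: mem_Times_iff)
  obtain K where K: "\<forall>\<^sub>F nu' in nhds nu. \<forall>bt r t. 2 \<le> nu' \<longrightarrow>
      I_integrand bt nu' r t \<le> K * cauchy_kernel (nu + 1) t"
    using I_integrand_locally_dominated[OF nu] by blast
  have "((\<lambda>\<theta>. integral\<^sup>L lborel (?s \<theta>)) \<longlongrightarrow> integral\<^sup>L lborel (?s (bt, nu, r))) ?F"
  proof (rule tendsto_integral_dominated[where w="\<lambda>t. K * cauchy_kernel (nu + 1) t"])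
    show "?s \<theta> \<in> borel_measurable lborel" if "\<theta> \<in> ?D" for \<theta>
      using I_integrand_measurable that by (auto simp: mem_Times_iff)
    show "?s (bt, nu, r) \<in> borel_measurable lborel" using I_integrand_measurable[OF nu] by simp
    show "integrable lborel (\<lambda>t. K * cauchy_kernel (nu + 1) t)"
      using cauchy_kernel_integrable[of "nu + 1"] nu by simp
    show "AE t in lborel. ((\<lambda>\<theta>. ?s \<theta> t) \<longlongrightarrow> ?s (bt, nu, r) t) ?F"
      using AE_lborel_singleton[of "t_minus nu r"] AE_lborel_singleton[of "t_plus bt nu r"]
      by eventually_elim (use r nu in \<open>auto intro!: tendsto_I_integrand BT NU R NU2\<close>)
    show "\<forall>\<^sub>F \<theta> in ?F. \<forall>t. \<bar>?s \<theta> t\<bar> \<le> K * cauchy_kernel (nu + 1) t"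
      using filterlim_iff[THEN iffD1, OF NU, rule_format, OF K] NU2
      by eventually_elim (auto simp: I_integrand_nonneg)
  qed
  then show "((\<lambda>(bt, nu, r). Ifun bt nu r) \<longlongrightarrow> Ifun bt nu r) ?F"
    by (simp add: Ifun_eq case_prod_beta')
qed

lemma tendsto_Ifun:
  assumes "(BT \<longlongrightarrow> bt) F" "(NU \<longlongrightarrow> nu) F" "(R \<longlongrightarrow> r) F"
    and "\<forall>\<^sub>F y in F. 2 \<le> NU y" "2 \<le> nu" "\<bar>r\<bar> < 1"
  shows "((\<lambda>y. Ifun (BT y) (NU y) (R y)) \<longlongrightarrow> Ifun bt nu r) F"
proof -
  have "\<forall>\<^sub>F y in F. \<bar>R y\<bar> < 1"
    using assms(3,6) by (rule order_tendstoD(2)[OF tendsto_rabs])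
  with assms(4) have "\<forall>\<^sub>F y in F. (BT y, NU y, R y) \<in> UNIV \<times> {2..} \<times> {-1<..<1}"
    by eventually_elim auto
  then have "((\<lambda>y. (\<lambda>(bt, nu, r). Ifun bt nu r) (BT y, NU y, R y))
      \<longlongrightarrow> (\<lambda>(bt, nu, r). Ifun bt nu r) (bt, nu, r)) F"
    using assms by (intro continuous_on_tendsto_compose[OF Ifun_continuous] tendsto_Pair) auto
  then show ?thesis by simp
qed

section \<open>The function \<open>J\<close>\<close>

lemma Jfun_scale: "l > 0 \<Longrightarrow> Jfun b nu r l = Jfun (b / l) nu r 1"
  by (simp add: Jfun_def abs_divide)

lemma Jfun_nonneg: "nu \<ge> 2 \<Longrightarrow> 0 \<le> Jfun b nu r l"
  unfolding Jfun_def using Ifun_nonneg by (simp add: add_nonneg_nonneg)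

lemma Jfun_pos:
  assumes "nu \<ge> 2" "\<bar>r\<bar> < 1" "l > 0" "b \<noteq> 0"
  shows "0 < Jfun b nu r l"
  unfolding Jfun_def using assms by (intro add_pos_pos Ifun_pos) (auto simp: abs_mult)

lemma Jfun_locally_bounded:
  assumes nu: "2 \<le> nu"
  obtains K where "\<forall>\<^sub>F nu' in nhds nu. \<forall>b r l. 2 \<le> nu' \<longrightarrow> Jfun b nu' r l \<le> K"
proof -
  obtain K where K: "\<forall>\<^sub>F nu' in nhds nu. \<forall>bt r t. 2 \<le> nu' \<longrightarrow>
      I_integrand bt nu' r t \<le> K * cauchy_kernel (nu + 1) t"
    using I_integrand_locally_dominated[OF nu] by blast
  let ?C = "K * integral\<^sup>L lborel (cauchy_kernel (nu + 1))"
  have "Ifun bt nu' r \<le> ?C" if "2 \<le> nu'" "\<forall>bt r t. I_integrand bt nu' r t \<le> K * cauchy_kernel (nu + 1) t"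
    for bt nu' r
  proof -
    have "Ifun bt nu' r \<le> integral\<^sup>L lborel (\<lambda>t. K * cauchy_kernel (nu + 1) t)"
      unfolding Ifun_eq using that cauchy_kernel_integrable[of "nu + 1"] nu
      by (intro integral_mono I_integrand_integrable) auto
    then show ?thesis by simp
  qed
  then have "\<forall>\<^sub>F nu' in nhds nu. \<forall>b r l. 2 \<le> nu' \<longrightarrow> Jfun b nu' r l \<le> 2 * ?C"
    using K by (auto simp: Jfun_def elim!: eventually_mono intro: add_mono[of _ ?C _ ?C, simplified])
  then show ?thesis using that by blast
qed

text \<open>\<open>J\<close> is continuous away from \<open>beta = 0\<close>, where \<open>sgn beta\<close> is locally constant.\<close>
lemma tendsto_Jfun:
  assumes B: "(B \<longlongrightarrow> b) F" and NU: "(NU \<longlongrightarrow> nu) F" and R: "(R \<longlongrightarrow> r) F" and L: "(L \<longlongrightarrow> l) F"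
    and NU2: "\<forall>\<^sub>F y in F. 2 \<le> NU y" and nu: "2 \<le> nu" and r: "\<bar>r\<bar> < 1"
    and b: "b \<noteq> 0" and l: "0 < l"
  shows "((\<lambda>y. Jfun (B y) (NU y) (R y) (L y)) \<longlongrightarrow> Jfun b nu r l) F"
proof -
  have RS: "((\<lambda>y. R y * sgn (B y)) \<longlongrightarrow> r * sgn b) F"
    using R B b by (intro tendsto_intros) auto
  have rs: "\<bar>r * sgn b\<bar> < 1" using r b by (simp add: abs_mult)
  show ?thesis unfolding Jfun_def using B L b l
    by (intro tendsto_add tendsto_Ifun[OF _ NU RS NU2 nu rs] tendsto_intros) auto
qed

lemma Jfun_measurable:
  assumes "2 \<le> nu" "\<bar>r\<bar> < 1" "0 < l"
  shows "(\<lambda>b. Jfun b nu r l) \<in> borel_measurable borel"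
proof (rule borel_measurable_continuous_countable_exceptions[of "{0}"])
  show "continuous_on (- {0}) (\<lambda>b. Jfun b nu r l)"
    using assms by (intro continuous_at_imp_continuous_on ballI)
      (auto simp: isCont_def intro!: tendsto_Jfun tendsto_ident_at)
qed simp

section \<open>Symmetric \<open>2 \<times> 2\<close> matrices\<close>

lemma quadratic_form_2:
  fixes A :: "real^2^2"
  shows "(vector [a, b] :: real^2) \<bullet> (A *v vector [a, b])
    = A$1$1 * a * a + A$1$2 * a * b + A$2$1 * b * a + A$2$2 * b * b"
  by (simp add: inner_vec_def matrix_vector_mult_def sum_2 algebra_simps)

lemma vector_2_nonzero: "a \<noteq> 0 \<or> b \<noteq> 0 \<Longrightarrow> (vector [a, b] :: real^2) \<noteq> 0"
  by (auto simp: vec_eq_iff forall_2)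

text \<open>Entrywise consequences of positive definiteness, obtained by testing the quadratic form
  on \<open>(1,0)\<close>, \<open>(0,1)\<close> and \<open>(S\<^sub>1\<^sub>2, -S\<^sub>1\<^sub>1)\<close>.\<close>
lemma pos_def2_entries:
  fixes S :: "real^2^2"
  assumes "pos_def2 S"
  shows "S$2$1 = S$1$2" "S$1$1 > 0" "S$2$2 > 0" "(S$1$2)\<^sup>2 < S$1$1 * S$2$2"
proof -
  have T: "transpose S = S" and P: "\<And>x::real^2. x \<noteq> 0 \<Longrightarrow> 0 < x \<bullet> (S *v x)"
    using assms by (auto simp: pos_def2_def)
  have "(transpose S)$1$2 = S$1$2" using T by simp
  then show sym: "S$2$1 = S$1$2" by (simp add: transpose_def)
  have "0 < (vector [1, 0] :: real^2) \<bullet> (S *v vector [1, 0])" by (rule P[OF vector_2_nonzero]) simp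
  then show s11: "S$1$1 > 0" by (simp add: quadratic_form_2)
  have "0 < (vector [0, 1] :: real^2) \<bullet> (S *v vector [0, 1])" by (rule P[OF vector_2_nonzero]) simp
  then show "S$2$2 > 0" by (simp add: quadratic_form_2)
  have "0 < (vector [S$1$2, - S$1$1] :: real^2) \<bullet> (S *v vector [S$1$2, - S$1$1])"
    by (rule P[OF vector_2_nonzero]) (use s11 in simp)
  then have "0 < S$1$1 * (S$1$1 * S$2$2 - (S$1$2)\<^sup>2)"
    by (simp add: quadratic_form_2 sym power2_eq_square algebra_simps)
  then show "(S$1$2)\<^sup>2 < S$1$1 * S$2$2" using s11 by (simp add: zero_less_mult_iff)
qed

text \<open>Superadditivity of the determinant on positive semidefinite \<open>2 \<times> 2\<close> matrices
  (described by their entries): the mixed term \<open>A\<^sub>1\<^sub>1 B\<^sub>2\<^sub>2 + A\<^sub>2\<^sub>2 B\<^sub>1\<^sub>1 - 2 A\<^sub>1\<^sub>2 B\<^sub>1\<^sub>2\<close>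
  is nonnegative by Cauchy-Schwarz and the AM-GM inequality.\<close>
lemma det2_superadditive:
  fixes A B :: "real^2^2"
  assumes A: "A$2$1 = A$1$2" "0 \<le> A$1$1" "0 \<le> A$2$2" "(A$1$2)\<^sup>2 \<le> A$1$1 * A$2$2"
    and B: "B$2$1 = B$1$2" "0 \<le> B$1$1" "0 \<le> B$2$2" "(B$1$2)\<^sup>2 \<le> B$1$1 * B$2$2"
  shows "det A + det B \<le> det (A + B)"
proof -
  define m where "m = A$1$1 * B$2$2 + A$2$2 * B$1$1"
  have m0: "0 \<le> m" using A B by (simp add: m_def)
  have "\<bar>A$1$2 * B$1$2\<bar>\<^sup>2 \<le> (A$1$1 * B$2$2) * (A$2$2 * B$1$1)"
    using mult_mono[OF A(4) B(4)] A B by (simp add: power_mult_distrib mult_ac)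
  also have "\<dots> \<le> (m / 2)\<^sup>2"
    using sum_squares_ge_zero[of "A$1$1 * B$2$2 - A$2$2 * B$1$1" 0]
    by (simp add: m_def power2_eq_square field_simps)
  finally have "\<bar>A$1$2 * B$1$2\<bar> \<le> m / 2" by (rule power2_le_imp_le) (use m0 in simp)
  then have "2 * (A$1$2 * B$1$2) \<le> m" by linarith
  then show ?thesis using A(1) B(1) by (simp add: det_2 m_def algebra_simps)
qed

lemma det2_scaleR: "det (c *\<^sub>R A) = c\<^sup>2 * det (A :: real^2^2)"
  by (simp add: det_2 power2_eq_square algebra_simps)

lemma r_of_abs_less_1:
  fixes A :: "real^2^2"
  assumes "0 < A$1$1" "0 < A$2$2" "(A$1$2)\<^sup>2 < A$1$1 * A$2$2"
  shows "\<bar>r_of A\<bar> < 1"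
proof -
  have "sqrt ((A$1$2)\<^sup>2) < sqrt (A$1$1 * A$2$2)" using assms(3) by (rule real_sqrt_less_mono)
  then show ?thesis using assms(1,2) by (simp add: r_of_def abs_divide divide_less_eq_1_pos)
qed

lemma l_of_pos: "0 < A$1$1 \<Longrightarrow> 0 < A$2$2 \<Longrightarrow> 0 < l_of A"
  by (simp add: l_of_def)

lemma r_of_scaleR:
  assumes "0 < c" shows "r_of (c *\<^sub>R A) = r_of A"
proof -
  have "sqrt (c * A$1$1 * (c * A$2$2)) = c * sqrt (A$1$1 * A$2$2)"
    using assms by (simp add: real_sqrt_mult power2_eq_square[symmetric] mult_ac)
  then show ?thesis using assms by (simp add: r_of_def)
qed

lemma l_of_scaleR: "0 < c \<Longrightarrow> l_of (c *\<^sub>R A) = l_of A"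
  by (simp add: l_of_def)

section \<open>The unnormalised posterior as prior times a kernel\<close>

definition post_matrix :: "real \<Rightarrow> real \<Rightarrow> real \<Rightarrow> real \<Rightarrow> real^2^2 \<Rightarrow> real \<Rightarrow> real^2^2" where
  "post_matrix nu0 kappa0 rho0 nu S b = Psi0 nu0 kappa0 rho0 b + nu *\<^sub>R S"

definition post_kernel :: "real \<Rightarrow> real \<Rightarrow> real \<Rightarrow> real \<Rightarrow> real^2^2 \<Rightarrow> real \<Rightarrow> real" where
  "post_kernel nu0 kappa0 rho0 nu S b =
     (let M = post_matrix nu0 kappa0 rho0 nu S b in
      \<bar>b\<bar> powr nu0 * det M powr (- (nu0 + nu) / 2) * Jfun b (nu0 + nu) (r_of M) (l_of M))"

lemma post_unnorm_eq:
  "post_unnorm p n nu0 kappa0 rho0 S b = p b * post_kernel nu0 kappa0 rho0 (real n - 1) S b"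
  unfolding post_unnorm_def post_kernel_def post_matrix_def Let_def by (simp only: mult.assoc)

lemma Psi0_entries:
  "Psi0 x kappa0 rho0 b $1$1 = x * kappa0\<^sup>2"
  "Psi0 x kappa0 rho0 b $1$2 = x * kappa0\<^sup>2 * (rho0 * b)"
  "Psi0 x kappa0 rho0 b $2$1 = x * kappa0\<^sup>2 * (rho0 * b)"
  "Psi0 x kappa0 rho0 b $2$2 = x * kappa0\<^sup>2 * b\<^sup>2"
  by (simp_all add: Psi0_def)

lemma det_Psi0: "det (Psi0 x kappa0 rho0 b) = (x * kappa0\<^sup>2 * sqrt (1 - rho0\<^sup>2) * \<bar>b\<bar>)\<^sup>2"
  if "\<bar>rho0\<bar> \<le> 1"
  using that abs_le_square_iff[of rho0 1]
  by (simp add: det_2 Psi0_entries power_mult_distrib power2_eq_square algebra_simps)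

lemma post_matrix_entries:
  "post_matrix x kappa0 rho0 nu S b $1$1 = x * kappa0\<^sup>2 + nu * S$1$1"
  "post_matrix x kappa0 rho0 nu S b $1$2 = x * kappa0\<^sup>2 * (rho0 * b) + nu * S$1$2"
  "post_matrix x kappa0 rho0 nu S b $2$1 = x * kappa0\<^sup>2 * (rho0 * b) + nu * S$2$1"
  "post_matrix x kappa0 rho0 nu S b $2$2 = x * kappa0\<^sup>2 * b\<^sup>2 + nu * S$2$2"
  by (simp_all add: post_matrix_def Psi0_entries)

text \<open>A bound on the power factors of the kernel: for \<open>x > 0\<close> the factor \<open>\<bar>c\<bar> powr x\<close> is
  compensated by the growth \<open>(a \<bar>c\<bar>)\<^sup>2\<close> of the determinant \<open>D\<close> in \<open>c\<close>.\<close>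
lemma powr_det_bound:
  fixes x a d D c nu :: real
  assumes x: "0 < x" and a: "0 < a" and d: "0 < d" "d \<le> D" and aD: "(a * \<bar>c\<bar>)\<^sup>2 \<le> D"
    and nu: "0 \<le> nu"
  shows "\<bar>c\<bar> powr x * D powr (- (x + nu) / 2) \<le> a powr (- x) * d powr (- nu / 2)"
proof (cases "c = 0")
  case True
  then show ?thesis by simp
next
  case False
  define y where "y = a * \<bar>c\<bar>"
  have y: "0 < y" using a False by (simp add: y_def)
  have "D powr (- (x + nu) / 2) = D powr (- x / 2) * D powr (- nu / 2)"
    by (simp add: powr_add[symmetric] field_simps)
  also have "\<dots> \<le> (y\<^sup>2) powr (- x / 2) * d powr (- nu / 2)"
    using x y d nu aD by (intro mult_mono powr_mono2') (auto simp: y_def)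
  also have "(y\<^sup>2) powr (- x / 2) = y powr (- x)"
    using y by (simp add: powr_powr flip: powr_numeral)
  finally have "\<bar>c\<bar> powr x * D powr (- (x + nu) / 2) \<le> \<bar>c\<bar> powr x * (y powr (- x) * d powr (- nu / 2))"
    by (rule mult_left_mono) simp
  also have "\<dots> = a powr (- x) * d powr (- nu / 2)"
    using a False by (simp add: y_def powr_mult powr_add[symmetric])
  finally show ?thesis .
qed

context
  fixes kappa0 rho0 nu :: real and S :: "real^2^2"
  assumes S: "pos_def2 S" and rho: "-1 < rho0" "rho0 < 1" and kappa: "0 < kappa0" and nu: "2 \<le> nu"
begin

text \<open>\<open>\<Psi>\<^sub>0\<close> is positive semidefinite, so by superadditivity the determinant of
  \<open>\<Psi>\<^sub>0 + \<nu> S\<close> dominates both \<open>det (\<nu> S)\<close> and \<open>det \<Psi>\<^sub>0\<close>, which grows quadratically in \<open>b\<close>.\<close>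
lemma post_matrix_det_lower:
  assumes x: "0 \<le> x"
  shows "nu\<^sup>2 * det S \<le> det (post_matrix x kappa0 rho0 nu S b)"
    and "(x * kappa0\<^sup>2 * sqrt (1 - rho0\<^sup>2) * \<bar>b\<bar>)\<^sup>2 \<le> det (post_matrix x kappa0 rho0 nu S b)"
proof -
  note SE = pos_def2_entries[OF S]
  have rho1: "\<bar>rho0\<bar> \<le> 1" using rho by simp
  have rb: "(rho0 * b)\<^sup>2 \<le> b\<^sup>2" using rho1 abs_le_square_iff[of rho0 1]
    by (simp add: power_mult_distrib mult_left_le_one_le)
  have Psi_psd: "(x * kappa0\<^sup>2 * (rho0 * b))\<^sup>2 \<le> x * kappa0\<^sup>2 * (x * kappa0\<^sup>2 * b\<^sup>2)"
    using mult_left_mono[OF rb zero_le_power2[of "x * kappa0\<^sup>2"]]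
    by (simp add: power_mult_distrib power2_eq_square mult_ac)
  have S_psd: "(nu * S$1$2)\<^sup>2 \<le> nu * S$1$1 * (nu * S$2$2)"
    using mult_left_mono[OF less_imp_le[OF SE(4)], of "nu\<^sup>2"]
    by (simp add: power_mult_distrib power2_eq_square mult_ac)
  have "det (Psi0 x kappa0 rho0 b) + det (nu *\<^sub>R S) \<le> det (post_matrix x kappa0 rho0 nu S b)"
    unfolding post_matrix_def using x SE nu Psi_psd S_psd
    by (intro det2_superadditive) (auto simp: Psi0_entries)
  moreover have "0 \<le> det S" using SE by (simp add: det_2 power2_eq_square)
  ultimately have "(x * kappa0\<^sup>2 * sqrt (1 - rho0\<^sup>2) * \<bar>b\<bar>)\<^sup>2 + nu\<^sup>2 * det S
      \<le> det (post_matrix x kappa0 rho0 nu S b)" and "0 \<le> nu\<^sup>2 * det S"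
    using rho1 by (simp_all add: det_Psi0 det2_scaleR)
  then show "nu\<^sup>2 * det S \<le> det (post_matrix x kappa0 rho0 nu S b)"
    and "(x * kappa0\<^sup>2 * sqrt (1 - rho0\<^sup>2) * \<bar>b\<bar>)\<^sup>2 \<le> det (post_matrix x kappa0 rho0 nu S b)"
    using zero_le_power2[of "x * kappa0\<^sup>2 * sqrt (1 - rho0\<^sup>2) * \<bar>b\<bar>"] by linarith+
qed

text \<open>For \<open>nu0 \<ge> 0\<close> the matrix \<open>M\<close> is positive definite, so its correlation lies in
  \<open>(-1, 1)\<close> and its scale ratio is positive.\<close>
lemma post_matrix_props:
  assumes x: "0 \<le> x"
  shows "0 < det (post_matrix x kappa0 rho0 nu S b)"
    and "\<bar>r_of (post_matrix x kappa0 rho0 nu S b)\<bar> < 1"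
    and "0 < l_of (post_matrix x kappa0 rho0 nu S b)"
proof -
  let ?M = "post_matrix x kappa0 rho0 nu S b"
  note SE = pos_def2_entries[OF S]
  have "0 < det S" using SE by (simp add: det_2 power2_eq_square)
  then show det_pos: "0 < det ?M"
    using post_matrix_det_lower(1)[OF x, of b] nu by (smt (verit) mult_pos_pos zero_less_power)
  have d11: "0 < ?M$1$1" and d22: "0 < ?M$2$2"
    using x kappa nu SE by (auto simp: post_matrix_entries intro!: add_nonneg_pos)
  moreover have "(?M$1$2)\<^sup>2 < ?M$1$1 * ?M$2$2"
    using det_pos SE(1) by (simp add: det_2 post_matrix_entries power2_eq_square)
  ultimately show "\<bar>r_of ?M\<bar> < 1" and "0 < l_of ?M"
    by (auto intro: r_of_abs_less_1 l_of_pos)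
qed

lemma tendsto_post_kernel:
  assumes X: "(X \<longlongrightarrow> x) F" and C: "(C \<longlongrightarrow> c) F"
    and X0: "\<forall>\<^sub>F y in F. 0 \<le> X y" and x: "0 \<le> x" and c: "c \<noteq> 0"
  shows "((\<lambda>y. post_kernel (X y) kappa0 rho0 nu S (C y)) \<longlongrightarrow> post_kernel x kappa0 rho0 nu S c) F"
proof -
  define M where "M y = post_matrix (X y) kappa0 rho0 nu S (C y)" for y
  let ?M0 = "post_matrix x kappa0 rho0 nu S c"
  note M0 = post_matrix_props[OF x, of c]
  have entries: "((\<lambda>y. M y $ 1 $ 1) \<longlongrightarrow> ?M0 $ 1 $ 1) F" "((\<lambda>y. M y $ 1 $ 2) \<longlongrightarrow> ?M0 $ 1 $ 2) F"
    "((\<lambda>y. M y $ 2 $ 1) \<longlongrightarrow> ?M0 $ 2 $ 1) F" "((\<lambda>y. M y $ 2 $ 2) \<longlongrightarrow> ?M0 $ 2 $ 2) F"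
    unfolding M_def post_matrix_entries by (intro tendsto_intros X C)+
  have pos: "0 < ?M0 $ 1 $ 1" "0 < ?M0 $ 2 $ 2"
    using x kappa nu pos_def2_entries[OF S] by (auto simp: post_matrix_entries intro!: add_nonneg_pos)
  have det: "((\<lambda>y. det (M y)) \<longlongrightarrow> det ?M0) F"
    unfolding det_2 by (intro tendsto_intros entries)
  have r: "((\<lambda>y. r_of (M y)) \<longlongrightarrow> r_of ?M0) F"
    unfolding r_of_def using pos by (intro tendsto_intros entries) auto
  have l: "((\<lambda>y. l_of (M y)) \<longlongrightarrow> l_of ?M0) F"
    unfolding l_of_def using pos by (intro tendsto_intros entries) auto
  have NU2: "\<forall>\<^sub>F y in F. 2 \<le> X y + nu" using X0 by eventually_elim (use nu in simp)
  show ?thesis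
    unfolding post_kernel_def Let_def M_def[symmetric] using c M0 x nu C
    by (intro tendsto_mult tendsto_powr tendsto_Jfun[OF C _ r l NU2] det X tendsto_intros) auto
qed

lemma post_kernel_measurable:
  assumes x: "0 \<le> x"
  shows "post_kernel x kappa0 rho0 nu S \<in> borel_measurable borel"
proof (rule borel_measurable_continuous_countable_exceptions[of "{0}"])
  show "continuous_on (- {0}) (post_kernel x kappa0 rho0 nu S)"
    using x by (intro continuous_at_imp_continuous_on ballI)
      (auto simp: isCont_def intro!: tendsto_post_kernel tendsto_ident_at)
qed simp

lemma post_kernel_nonneg: "0 \<le> x \<Longrightarrow> 0 \<le> post_kernel x kappa0 rho0 nu S b"
  using nu by (simp add: post_kernel_def Let_def Jfun_nonneg)

text \<open>At \<open>nu0 = 0\<close> the prior scale matrix vanishes and the kernel is a constant multiple of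
  \<open>J\<close> evaluated at the data summaries \<open>r_of S\<close>, \<open>l_of S\<close>.\<close>
lemma post_kernel_at_0:
  assumes "b \<noteq> 0"
  shows "post_kernel 0 kappa0 rho0 nu S b = (nu\<^sup>2 * det S) powr (- nu / 2) * Jfun b nu (r_of S) (l_of S)"
proof -
  have "post_matrix 0 kappa0 rho0 nu S b = nu *\<^sub>R S"
    by (simp add: post_matrix_def Psi0_def)
  then show ?thesis
    using assms nu by (simp add: post_kernel_def det2_scaleR r_of_scaleR l_of_scaleR)
qed

lemma post_kernel_power_factors_le:
  assumes x: "0 < x"
  shows "\<bar>b\<bar> powr x * det (post_matrix x kappa0 rho0 nu S b) powr (- (x + nu) / 2)
    \<le> (x * kappa0\<^sup>2 * sqrt (1 - rho0\<^sup>2)) powr (- x) * (nu\<^sup>2 * det S) powr (- nu / 2)"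
proof -
  have "0 < sqrt (1 - rho0\<^sup>2)" using rho by (intro sqrt_1_minus_sq_pos) simp
  moreover have "0 < det S" using pos_def2_entries[OF S] by (simp add: det_2 power2_eq_square)
  ultimately show ?thesis
    using x kappa nu post_matrix_det_lower[of x b] by (intro powr_det_bound) auto
qed

text \<open>Uniform boundedness of the kernel for small \<open>nu0 > 0\<close>: the \<open>nu0\<close>-dependent factor
  \<open>(nu0 kappa0\<^sup>2 sqrt (1 - rho0\<^sup>2)) powr (-nu0)\<close> above tends to \<open>1\<close>, and \<open>J\<close> is locally
  bounded in its degrees of freedom.\<close>
lemma post_kernel_eventually_bounded:
  obtains W where "\<forall>\<^sub>F x in at_right 0. \<forall>b. \<bar>post_kernel x kappa0 rho0 nu S b\<bar> \<le> W"
proof -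
  define C0 where "C0 = (nu\<^sup>2 * det S) powr (- nu / 2)"
  have "0 < sqrt (1 - rho0\<^sup>2)" using rho by (intro sqrt_1_minus_sq_pos) simp
  then have "((\<lambda>x. (x * (kappa0\<^sup>2 * sqrt (1 - rho0\<^sup>2))) powr (- x)) \<longlongrightarrow> 1) (at_right 0)"
    using kappa by real_asymp
  then have "\<forall>\<^sub>F x in at_right 0. (x * kappa0\<^sup>2 * sqrt (1 - rho0\<^sup>2)) powr (- x) < 2"
    by (intro order_tendstoD(2)) (auto simp: mult.assoc)
  moreover obtain K where K: "\<forall>\<^sub>F nu' in nhds nu. \<forall>b r l. 2 \<le> nu' \<longrightarrow> Jfun b nu' r l \<le> K"
    using Jfun_locally_bounded[OF nu] by blast
  have "((\<lambda>x. x + nu) \<longlongrightarrow> nu) (at_right 0)" by (auto intro!: tendsto_eq_intros)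
  from filterlim_iff[THEN iffD1, OF this, rule_format, OF K]
  have "\<forall>\<^sub>F x in at_right 0. \<forall>b r l. 2 \<le> x + nu \<longrightarrow> Jfun b (x + nu) r l \<le> K" .
  moreover have "\<forall>\<^sub>F x in at_right (0::real). 0 < x" by (simp add: eventually_at_right_less)
  ultimately have "\<forall>\<^sub>F x in at_right 0. \<forall>b. \<bar>post_kernel x kappa0 rho0 nu S b\<bar> \<le> (2 * C0) * K"
  proof eventually_elim
    case (elim x)
    show ?case
    proof
      fix b
      let ?M = "post_matrix x kappa0 rho0 nu S b"
      have "\<bar>b\<bar> powr x * det ?M powr (- (x + nu) / 2)
          \<le> (x * kappa0\<^sup>2 * sqrt (1 - rho0\<^sup>2)) powr (- x) * C0"
        unfolding C0_def by (rule post_kernel_power_factors_le[OF elim(3)])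
      also have "\<dots> \<le> 2 * C0" using elim(1) by (intro mult_right_mono) (auto simp: C0_def)
      finally have "\<bar>b\<bar> powr x * det ?M powr (- (x + nu) / 2) \<le> 2 * C0" .
      moreover have "Jfun b (x + nu) (r_of ?M) (l_of ?M) \<le> K" using elim(2,3) nu by auto
      ultimately show "\<bar>post_kernel x kappa0 rho0 nu S b\<bar> \<le> (2 * C0) * K"
        using elim(3) nu post_kernel_nonneg[of x b]
        by (auto simp: post_kernel_def Let_def C0_def Jfun_nonneg intro!: mult_mono)
    qed
  qed
  then show ?thesis using that by blast
qed

end

section \<open>Limits of normalised posterior densities\<close>

lemma integral_density_mult_pos:
  assumes p: "proper_density p" and int: "integrable lborel (\<lambda>c. p c * h c)"
    and h: "\<And>c. c \<noteq> 0 \<Longrightarrow> 0 < h c"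
  shows "0 < (\<integral>c. p c * h c \<partial>lborel)"
proof (rule ccontr)
  have p_nonneg: "0 \<le> p c" for c using p by (simp add: proper_density_def)
  have nn: "AE c in lborel. 0 \<le> p c * h c"
    using AE_lborel_singleton[of 0] by eventually_elim (simp add: p_nonneg h less_imp_le)
  assume "\<not> 0 < (\<integral>c. p c * h c \<partial>lborel)"
  then have "(\<integral>c. p c * h c \<partial>lborel) = 0" using integral_nonneg_AE[OF nn] by simp
  then have "AE c in lborel. p c * h c = 0" using integral_nonneg_eq_0_iff_AE[OF int nn] by simp
  then have "AE c in lborel. p c = 0"
    using AE_lborel_singleton[of 0] by eventually_elim (use h in force)
  then have "integral\<^sup>L lborel p = 0" by (rule integral_eq_zero_AE)
  then show False using p by (simp add: proper_density_def)
qed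

lemma normalised_density_limit:
  fixes H :: "'p::first_countable_topology \<Rightarrow> real \<Rightarrow> real"
  assumes p: "proper_density p" and nontriv: "at a within T \<noteq> bot"
    and H_meas: "\<And>x. x \<in> T \<Longrightarrow> H x \<in> borel_measurable lborel"
    and h_meas: "h \<in> borel_measurable lborel"
    and lim: "\<And>c. c \<noteq> 0 \<Longrightarrow> ((\<lambda>x. H x c) \<longlongrightarrow> h c) (at a within T)"
    and bound: "\<forall>\<^sub>F x in at a within T. \<forall>c. \<bar>H x c\<bar> \<le> W"
    and h_pos: "\<And>c. c \<noteq> 0 \<Longrightarrow> 0 < h c" and b: "b \<noteq> 0"
  shows "((\<lambda>x. p b * H x b / (\<integral>c. p c * H x c \<partial>lborel))
      \<longlongrightarrow> p b * h b / (\<integral>c. p c * h c \<partial>lborel)) (at a within T)"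
proof -
  have [measurable]: "p \<in> borel_measurable lborel" and p_nonneg: "\<And>c. 0 \<le> p c"
    and p_int: "integrable lborel p"
    using p by (auto simp: proper_density_def)
  have h_le: "\<bar>h c\<bar> \<le> W" if "c \<noteq> 0" for c
  proof -
    from bound have "\<forall>\<^sub>F x in at a within T. \<bar>H x c\<bar> \<le> W" by eventually_elim blast
    then show ?thesis by (rule tendsto_upperbound[OF tendsto_rabs[OF lim[OF that]] _ nontriv])
  qed
  have dom: "\<bar>p c * f c\<bar> \<le> W * p c" if "\<bar>f c\<bar> \<le> W" for f c
    using mult_left_mono[OF that p_nonneg[of c]] p_nonneg[of c] by (simp add: abs_mult mult.commute)
  have int_h: "integrable lborel (\<lambda>c. p c * h c)"
  proof (rule Bochner_Integration.integrable_bound)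
    show "integrable lborel (\<lambda>c. W * p c)" using p_int by simp
    show "AE c in lborel. norm (p c * h c) \<le> norm (W * p c)"
      using AE_lborel_singleton[of 0]
      by eventually_elim (auto intro: order_trans[OF dom[of h, OF h_le] abs_ge_self])
  qed (use h_meas in measurable)
  have "((\<lambda>x. \<integral>c. p c * H x c \<partial>lborel) \<longlongrightarrow> \<integral>c. p c * h c \<partial>lborel) (at a within T)"
  proof (rule tendsto_integral_dominated[where w="\<lambda>c. W * p c"])
    show "(\<lambda>c. p c * H x c) \<in> borel_measurable lborel" if "x \<in> T" for x
      using H_meas[OF that] by measurable
    show "AE c in lborel. ((\<lambda>x. p c * H x c) \<longlongrightarrow> p c * h c) (at a within T)"
      using AE_lborel_singleton[of 0] by eventually_elim (intro tendsto_mult_left lim)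
    show "\<forall>\<^sub>F x in at a within T. \<forall>c. \<bar>p c * H x c\<bar> \<le> W * p c"
      using bound by eventually_elim (auto intro: dom)
  qed (use p_int h_meas in simp_all)
  moreover have "0 < (\<integral>c. p c * h c \<partial>lborel)"
    by (rule integral_density_mult_pos[OF p int_h h_pos])
  ultimately show ?thesis
    by (intro tendsto_divide tendsto_mult_left lim b) auto
qed

text \<open>The posterior is the
  normalisation of \<open>p\<close> times the kernel; the kernel converges to a constant times
  \<open>J(beta, nu, r, l)\<close>, and the constant cancels.\<close>
lemma posterior_limit:
  fixes n :: nat and S :: "real^2^2" and kappa0 rho0 b :: real and p :: "real \<Rightarrow> real"
  assumes n: "n \<ge> 3" and S: "pos_def2 S" and rho: "-1 < rho0" "rho0 < 1" and kappa: "kappa0 > 0"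
    and p: "proper_density p" and b: "b \<noteq> 0"
  shows "((\<lambda>nu0. posterior p n nu0 kappa0 rho0 S b) \<longlongrightarrow>
          p b * Jfun b (real n - 1) (r_of S) (l_of S)
          / (LINT b'|lborel. p b' * Jfun b' (real n - 1) (r_of S) (l_of S))) (at_right 0)"
proof -
  define nu where "nu = real n - 1"
  have nu: "2 \<le> nu" using n by (simp add: nu_def)
  define H where "H x c = post_kernel x kappa0 rho0 nu S c" for x c
  define J0 where "J0 c = Jfun c nu (r_of S) (l_of S)" for c
  define C0 where "C0 = (nu\<^sup>2 * det S) powr (- nu / 2)"
  note SE = pos_def2_entries[OF S]
  have C0: "0 < C0" using SE nu by (simp add: C0_def det_2 power2_eq_square)
  have r: "\<bar>r_of S\<bar> < 1" and l: "0 < l_of S"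
    using SE by (auto intro: r_of_abs_less_1 l_of_pos)
  obtain W where W: "\<forall>\<^sub>F x in at_right 0. \<forall>c. \<bar>H x c\<bar> \<le> W"
    using post_kernel_eventually_bounded[OF S rho kappa nu] unfolding H_def by blast
  have "((\<lambda>x. p b * H x b / (\<integral>c. p c * H x c \<partial>lborel))
      \<longlongrightarrow> p b * (C0 * J0 b) / (\<integral>c. p c * (C0 * J0 c) \<partial>lborel)) (at_right 0)"
  proof (rule normalised_density_limit[OF p _ _ _ _ W _ b])
    show "H x \<in> borel_measurable lborel" if "x \<in> {0<..}" for x
      using post_kernel_measurable[OF S rho kappa nu, of x] that by (simp add: H_def[abs_def])
    show "(\<lambda>c. C0 * J0 c) \<in> borel_measurable lborel"
      using Jfun_measurable[OF nu r l] by (simp add: J0_def)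
    show "((\<lambda>x. H x c) \<longlongrightarrow> C0 * J0 c) (at_right 0)" if "c \<noteq> 0" for c
      using tendsto_post_kernel[OF S rho kappa nu tendsto_ident_at tendsto_const, of 0 "{0<..}" c] that
      by (simp add: H_def post_kernel_at_0[OF S rho kappa nu] C0_def J0_def eventually_at_filter)
    show "0 < C0 * J0 c" if "c \<noteq> 0" for c
      using C0 Jfun_pos[OF nu r l that] by (simp add: J0_def)
  qed simp
  moreover have "(\<integral>c. p c * (C0 * J0 c) \<partial>lborel) = C0 * (\<integral>c. p c * J0 c \<partial>lborel)"
    by (simp add: mult.left_commute[of _ C0])
  ultimately show ?thesis
    using C0 by (simp add: posterior_def post_unnorm_eq H_def J0_def nu_def)
qed

lemma proper_density_rescale:
  assumes q: "proper_density q" and l: "0 < l"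
  shows "proper_density (\<lambda>b. q (b / l) / l)"
  unfolding proper_density_def
proof (intro conjI allI)
  have [measurable]: "q \<in> borel_measurable lborel" and q_int: "integrable lborel q"
    using q by (auto simp: proper_density_def)
  show "(\<lambda>b. q (b / l) / l) \<in> borel_measurable lborel" by measurable
  show "0 \<le> q (b / l) / l" for b using q l by (simp add: proper_density_def)
  have "integrable lborel (\<lambda>b. q (0 + (1 / l) * b))"
    by (rule lborel_integrable_real_affine[OF q_int]) (use l in simp)
  then show "integrable lborel (\<lambda>b. q (b / l) / l)" by simp
  have "(\<integral>b. q (b / l) / l \<partial>lborel) = l * (\<integral>t. q (l * t / l) / l \<partial>lborel)"
    using lborel_integral_real_affine[of l "\<lambda>b. q (b / l) / l" 0] l by simp
  then show "(\<integral>b. q (b / l) / l \<partial>lborel) = 1" using q l by (simp add: proper_density_def)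
qed

text \<open>Part 3: for a proper prior \<open>q\<close> on \<open>bt = beta / l\<close>, the posterior of \<open>bt\<close> converges to
  \<open>q(bt) J(bt, nu, r, 1)\<close> normalised; this is part 1 applied to the induced prior on \<open>beta\<close>
  together with the substitution \<open>beta = l bt\<close> and the scaling law of \<open>J\<close>.\<close>
lemma posterior_limit_rescaled:
  fixes n :: nat and S :: "real^2^2" and kappa0 rho0 bt :: real and q :: "real \<Rightarrow> real"
  assumes n: "n \<ge> 3" and S: "pos_def2 S" and rho: "-1 < rho0" "rho0 < 1" and kappa: "kappa0 > 0"
    and q: "proper_density q" and bt: "bt \<noteq> 0"
  defines "nu \<equiv> real n - 1" and "r \<equiv> r_of S" and "l \<equiv> l_of S"
  shows "((\<lambda>nu0. l * posterior (\<lambda>b. q (b / l) / l) n nu0 kappa0 rho0 S (l * bt)) \<longlongrightarrow>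
           q bt * Jfun bt nu r 1 / (LINT t|lborel. q t * Jfun t nu r 1)) (at_right 0)"
proof -
  have l: "0 < l" using pos_def2_entries[OF S] by (simp add: l_def l_of_pos)
  define p where "p b = q (b / l) / l" for b
  have lb: "l * bt \<noteq> 0" using l bt by simp
  have "((\<lambda>nu0. posterior p n nu0 kappa0 rho0 S (l * bt)) \<longlongrightarrow>
      p (l * bt) * Jfun (l * bt) nu r l / (LINT b|lborel. p b * Jfun b nu r l)) (at_right 0)"
    using posterior_limit[OF n S rho kappa proper_density_rescale[OF q l] lb]
    unfolding nu_def r_def l_def p_def .
  moreover have "(LINT b|lborel. p b * Jfun b nu r l) = (LINT t|lborel. q t * Jfun t nu r 1)"
    using lborel_integral_real_affine[of l "\<lambda>b. p b * Jfun b nu r l" 0] l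
    by (simp add: p_def Jfun_scale[OF l])
  ultimately have "((\<lambda>nu0. l * posterior p n nu0 kappa0 rho0 S (l * bt)) \<longlongrightarrow>
      l * (p (l * bt) * Jfun (l * bt) nu r l / (LINT t|lborel. q t * Jfun t nu r 1))) (at_right 0)"
    by (intro tendsto_mult_left) simp
  then show ?thesis using l by (simp add: p_def[abs_def] Jfun_scale[OF l, of "l * bt"])
qed

theorem mainTheorem3:
  fixes n :: nat and S :: "real^2^2" and kappa0 rho0 :: real and p :: "real \<Rightarrow> real"
  assumes "n \<ge> 3"
    and "pos_def2 S"
    and "-1 < rho0" and "rho0 < 1" and "kappa0 > 0"
    and "proper_density p"
  defines "nu \<equiv> real n - 1"
  defines "r \<equiv> r_of S"
  defines "l \<equiv> l_of S"
  shows "(\<forall>b. b \<noteq> 0 \<longrightarrow>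
           ((\<lambda>nu0. posterior p n nu0 kappa0 rho0 S b) \<longlongrightarrow>
              p b * Jfun b nu r l / (LINT b'|lborel. p b' * Jfun b' nu r l)) (at_right 0))
     \<and> (\<forall>b. b \<noteq> 0 \<longrightarrow> Jfun b nu r l = Jfun (b / l) nu r 1)
     \<and> (\<forall>q. proper_density q \<longrightarrow> (\<forall>bt. bt \<noteq> 0 \<longrightarrow>
           ((\<lambda>nu0. l * posterior (\<lambda>b. q (b / l) / l) n nu0 kappa0 rho0 S (l * bt)) \<longlongrightarrow>
              q bt * Jfun bt nu r 1 / (LINT t|lborel. q t * Jfun t nu r 1)) (at_right 0)))"
proof (intro conjI allI impI)
  have l: "0 < l" using pos_def2_entries[OF assms(2)] by (simp add: l_def l_of_pos)
  show "((\<lambda>nu0. posterior p n nu0 kappa0 rho0 S b) \<longlongrightarrow>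
      p b * Jfun b nu r l / (LINT b'|lborel. p b' * Jfun b' nu r l)) (at_right 0)" if "b \<noteq> 0" for b
    unfolding nu_def r_def l_def by (rule posterior_limit[OF assms(1-6) that])
  show "Jfun b nu r l = Jfun (b / l) nu r 1" for b by (rule Jfun_scale[OF l])
  show "((\<lambda>nu0. l * posterior (\<lambda>b. q (b / l) / l) n nu0 kappa0 rho0 S (l * bt)) \<longlongrightarrow>
      q bt * Jfun bt nu r 1 / (LINT t|lborel. q t * Jfun t nu r 1)) (at_right 0)"
    if "proper_density q" "bt \<noteq> 0" for q bt
    unfolding nu_def r_def l_def by (rule posterior_limit_rescaled[OF assms(1-5) that])
qed

end
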